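(* Let $A\in\mathbb{R}^{n\times n}$ be symmetric positive semidefinite, let $1\le k\le n$, and let $\mathrm{OPT}=\max_{\|y\|_2=1,\|y\|_0\le k} y^{\intercal}Ay$. For each $i\in[n]$ let $\hat x_i\in\mathbb{R}^n$ be defined by $[\hat x_i]_j=A_{i,j}$ if $|A_{i,j}|$ is one of the $k$ largest (in absolute value) entries of the $i$-th column $A_{\cdot,i}$, and $[\hat x_i]_j=0$ otherwise, and let $x_i=\hat x_i/\|\hat x_i\|_2$. Let $e_i$ denote the $i$-th standard basis vector. Then the best (i.e. maximizing $v^{\intercal}Av$) vector $v$ among all the $x_i$'s and $e_i$'s satisfies $v^{\intercal}Av\ge \mathrm{OPT}/\sqrt{k}$.
   Context: $\|y\|_0$ denotes the number of nonzero entries of $y$. Each $x_i$ and $e_i$ is a unit-norm $k$-sparse vector. *)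

theory Defs
  imports "HOL-Analysis.Analysis"
begin

definition l0norm :: "real ^ 'n \<Rightarrow> nat" where
  "l0norm y = card {j. y $ j \<noteq> 0}"

definition sym_psd :: "real ^ 'n ^ 'n \<Rightarrow> bool" where
  "sym_psd A \<longleftrightarrow> transpose A = A \<and> (\<forall>x. 0 \<le> x \<bullet> (A *v x))"

definition sparse_opt :: "real ^ 'n ^ 'n \<Rightarrow> nat \<Rightarrow> real" where
  "sparse_opt A k = Sup {y \<bullet> (A *v y) | y. norm y = 1 \<and> l0norm y \<le> k}"

definition topk_set :: "real ^ 'n ^ 'n \<Rightarrow> nat \<Rightarrow> 'n \<Rightarrow> 'n set \<Rightarrow> bool" where
  "topk_set A k i S \<longleftrightarrow> card S = k \<and>
     (\<forall>j\<in>S. \<forall>j'. j' \<notin> S \<longrightarrow> \<bar>A $ j' $ i\<bar> \<le> \<bar>A $ j $ i\<bar>)"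

definition trunc_col :: "real ^ 'n ^ 'n \<Rightarrow> 'n \<Rightarrow> 'n set \<Rightarrow> real ^ 'n" where
  "trunc_col A i S = (\<chi> j. if j \<in> S then A $ j $ i else 0)"

end

theory Submission
  imports Defs
begin

text \<open>Let \<open>M\<close> be the best value among the candidates and \<open>c\<^sub>i\<close> the truncated column, so
  \<open>x\<^sub>i = c\<^sub>i / \<parallel>c\<^sub>i\<parallel>\<close>. The basis vectors give \<open>A\<^sub>i\<^sub>i \<le> M\<close>, and since \<open>x\<^sub>i\<^sup>T A e\<^sub>i = \<parallel>c\<^sub>i\<parallel>\<close>,
  the Cauchy--Schwarz inequality for the form \<open>A\<close> gives \<open>\<parallel>c\<^sub>i\<parallel>\<^sup>2 \<le> (x\<^sub>i\<^sup>T A x\<^sub>i) A\<^sub>i\<^sub>i \<le> M\<^sup>2\<close>.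
  For a \<open>k\<close>-sparse vector \<open>y\<close>, the entry \<open>(Ay)\<^sub>i\<close> only involves \<open>k\<close> entries of column \<open>i\<close>,
  so \<open>|(Ay)\<^sub>i| \<le> \<parallel>c\<^sub>i\<parallel> \<parallel>y\<parallel> \<le> M \<parallel>y\<parallel>\<close>; hence \<open>y\<^sup>T A y \<le> M \<parallel>y\<parallel> \<parallel>y\<parallel>\<^sub>1 \<le> M \<surd>k \<parallel>y\<parallel>\<^sup>2\<close>.\<close>

lemma nonneg_binary_quadratic_form_discriminant:
  fixes a b c :: real
  assumes "\<And>p r. 0 \<le> p\<^sup>2 * a + 2 * p * r * b + r\<^sup>2 * c"
  shows "b\<^sup>2 \<le> a * c"
proof (cases "c = 0")
  case True
  have "b = 0"
  proof (rule ccontr)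
    assume "b \<noteq> 0"
    then have "0 \<le> (-1 :: real)"
      using assms[of 1 "- (a + 1) / (2 * b)"] True by (simp add: field_simps)
    then show False by simp
  qed
  then show ?thesis using True by simp
next
  case False
  have "0 \<le> c" using assms[of 0 1] by simp
  moreover have "0 \<le> c * (a * c - b\<^sup>2)"
    using assms[of c "- b"] by (simp add: algebra_simps power2_eq_square)
  ultimately show ?thesis using False by (simp add: zero_le_mult_iff)
qed

lemma inner_matrix_vector_mult_commute:
  fixes A :: "real ^ 'n ^ 'n"
  assumes "transpose A = A"
  shows "v \<bullet> (A *v u) = u \<bullet> (A *v v)"
proof -
  have "v \<bullet> (A *v u) = (transpose A *v v) \<bullet> u"
    by (simp add: dot_lmul_matrix transpose_matrix_vector)
  then show ?thesis using assms by (simp add: inner_commute)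
qed

lemma sym_psd_Cauchy_Schwarz:
  fixes A :: "real ^ 'n ^ 'n"
  assumes "sym_psd A"
  shows "(u \<bullet> (A *v v))\<^sup>2 \<le> (u \<bullet> (A *v u)) * (v \<bullet> (A *v v))"
proof (rule nonneg_binary_quadratic_form_discriminant)
  fix p r :: real
  have "v \<bullet> (A *v u) = u \<bullet> (A *v v)"
    using assms inner_matrix_vector_mult_commute unfolding sym_psd_def by blast
  then have "(p *\<^sub>R u + r *\<^sub>R v) \<bullet> (A *v (p *\<^sub>R u + r *\<^sub>R v))
      = p\<^sup>2 * (u \<bullet> (A *v u)) + 2 * p * r * (u \<bullet> (A *v v)) + r\<^sup>2 * (v \<bullet> (A *v v))"
    by (simp add: matrix_vector_right_distrib matrix_vector_mult_scaleR inner_add_left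
        inner_add_right algebra_simps power2_eq_square)
  moreover have "0 \<le> (p *\<^sub>R u + r *\<^sub>R v) \<bullet> (A *v (p *\<^sub>R u + r *\<^sub>R v))"
    using assms unfolding sym_psd_def by blast
  ultimately show "0 \<le> p\<^sup>2 * (u \<bullet> (A *v u)) + 2 * p * r * (u \<bullet> (A *v v)) + r\<^sup>2 * (v \<bullet> (A *v v))"
    by simp
qed

lemma quadratic_form_axis: "axis i 1 \<bullet> (A *v axis i 1) = A $ i $ (i :: 'n :: finite)"
  by (simp add: inner_axis' matrix_vector_mult_basis column_def)

lemma sum_le_sum_of_dominating_set:
  fixes g :: "'a \<Rightarrow> real"
  assumes "finite S" "finite T" "card T \<le> card S"
    and nonneg: "\<And>j. 0 \<le> g j"
    and dominating: "\<And>j j'. j \<in> S \<Longrightarrow> j' \<notin> S \<Longrightarrow> g j' \<le> g j"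
  shows "sum g T \<le> sum g S"
proof -
  have "card (T - S) \<le> card (S - T)"
    using assms(1-3) card_Int_Diff[of T S] card_Int_Diff[of S T] by (simp add: Int_commute)
  then obtain f where f: "f ` (T - S) \<subseteq> S - T" "inj_on f (T - S)"
    using card_le_inj[of "T - S" "S - T"] assms(1,2) by auto
  have "sum g (T - S) \<le> sum (g \<circ> f) (T - S)"
    using f(1) dominating by (intro sum_mono) auto
  also have "\<dots> = sum g (f ` (T - S))" using f(2) by (simp add: sum.reindex)
  also have "\<dots> \<le> sum g (S - T)" using f(1) assms(1) nonneg by (intro sum_mono2) auto
  finally have "sum g (T - S) \<le> sum g (S - T)" .
  then show ?thesis
    using sum.Int_Diff[OF assms(1), of g T] sum.Int_Diff[OF assms(2), of g S]
    by (simp add: Int_commute)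
qed

lemma topk_set_sum_squares_le:
  fixes A :: "real ^ 'n ^ 'n"
  assumes "topk_set A k i S" "card T \<le> k"
  shows "(\<Sum>j\<in>T. (A $ j $ i)\<^sup>2) \<le> (\<Sum>j\<in>S. (A $ j $ i)\<^sup>2)"
  using assms unfolding topk_set_def
  by (intro sum_le_sum_of_dominating_set) (auto simp: abs_le_square_iff)

lemma norm_trunc_col_square: "(norm (trunc_col A i S))\<^sup>2 = (\<Sum>j\<in>S. (A $ j $ i)\<^sup>2)"
proof -
  have "(norm (trunc_col A i S))\<^sup>2 = (\<Sum>j\<in>UNIV. if j \<in> S then (A $ j $ i)\<^sup>2 else 0)"
    unfolding power2_norm_eq_inner inner_vec_def trunc_col_def
    by (intro sum.cong) (auto simp: power2_eq_square)
  then show ?thesis by (simp add: sum.If_cases)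
qed

lemma inner_trunc_col_column:
  "trunc_col A i S \<bullet> (A *v axis i 1) = (norm (trunc_col A i S))\<^sup>2"
  unfolding power2_norm_eq_inner inner_vec_def trunc_col_def
  by (intro sum.cong) (auto simp: matrix_vector_mult_basis column_def)

text \<open>No case distinction on a zero truncated column is needed: its normalisation is then \<open>0\<close>
  as well, because \<open>inverse 0 = 0\<close>.\<close>

lemma norm_trunc_col_square_le:
  fixes A :: "real ^ 'n ^ 'n" and i :: 'n and S :: "'n set"
  assumes "sym_psd A"
  defines "x \<equiv> inverse (norm (trunc_col A i S)) *\<^sub>R trunc_col A i S"
  shows "(norm (trunc_col A i S))\<^sup>2 \<le> (x \<bullet> (A *v x)) * A $ i $ i"
proof -
  have "x \<bullet> (A *v axis i 1) = inverse (norm (trunc_col A i S)) * (norm (trunc_col A i S))\<^sup>2"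
    unfolding x_def by (simp add: inner_trunc_col_column)
  also have "\<dots> = norm (trunc_col A i S)"
    by (cases "trunc_col A i S = 0") (simp_all add: power2_eq_square)
  finally show ?thesis
    using sym_psd_Cauchy_Schwarz[OF assms(1), of x "axis i 1"] by (simp add: quadratic_form_axis)
qed

lemma norm_trunc_col_le:
  fixes A :: "real ^ 'n ^ 'n" and i :: 'n and S :: "'n set"
  defines "x \<equiv> inverse (norm (trunc_col A i S)) *\<^sub>R trunc_col A i S"
  assumes psd: "sym_psd A" and x_le: "x \<bullet> (A *v x) \<le> M" and diag_le: "A $ i $ i \<le> M"
  shows "norm (trunc_col A i S) \<le> M"
proof (rule power2_le_imp_le)
  have diag_nonneg: "0 \<le> A $ i $ i"
    using psd quadratic_form_axis unfolding sym_psd_def by metis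
  then show "0 \<le> M" using diag_le by linarith
  have "(norm (trunc_col A i S))\<^sup>2 \<le> (x \<bullet> (A *v x)) * A $ i $ i"
    unfolding x_def by (rule norm_trunc_col_square_le[OF psd])
  also have "\<dots> \<le> M * M"
    using x_le diag_le diag_nonneg \<open>0 \<le> M\<close> by (intro mult_mono)
  finally show "(norm (trunc_col A i S))\<^sup>2 \<le> M\<^sup>2" by (simp add: power2_eq_square)
qed

lemma L2_set_support_eq_norm: "L2_set (\<lambda>j. y $ j) {j. y $ j \<noteq> 0} = norm y"
proof -
  have "(\<Sum>j | y $ j \<noteq> 0. (y $ j)\<^sup>2) = (\<Sum>j\<in>UNIV. (y $ j)\<^sup>2)"
    by (rule sum.mono_neutral_left) auto
  then show ?thesis by (simp add: norm_vec_def L2_set_def)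
qed

lemma sum_abs_le_sqrt_l0norm: "(\<Sum>j\<in>UNIV. \<bar>y $ j\<bar>) \<le> sqrt (real (l0norm y)) * norm y"
proof -
  define T where "T = {j. y $ j \<noteq> 0}"
  have "(\<Sum>j\<in>UNIV. \<bar>y $ j\<bar>) = (\<Sum>j\<in>T. \<bar>1\<bar> * \<bar>y $ j\<bar>)"
    by (simp, intro sum.mono_neutral_right) (auto simp: T_def)
  also have "\<dots> \<le> L2_set (\<lambda>_. 1) T * L2_set (\<lambda>j. y $ j) T" by (rule L2_set_mult_ineq)
  finally show ?thesis by (simp add: L2_set_constant l0norm_def T_def L2_set_support_eq_norm)
qed

lemma abs_matrix_vector_mult_le_norm_trunc_col:
  fixes A :: "real ^ 'n ^ 'n"
  assumes "transpose A = A" "topk_set A k i S" "l0norm y \<le> k"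
  shows "\<bar>(A *v y) $ i\<bar> \<le> norm (trunc_col A i S) * norm y"
proof -
  define T where "T = {j. y $ j \<noteq> 0}"
  have "A $ i $ j = A $ j $ i" for j
    using assms(1) by (metis transpose_def vec_lambda_beta)
  then have "(A *v y) $ i = (\<Sum>j\<in>UNIV. A $ j $ i * y $ j)"
    by (simp add: matrix_vector_mult_def)
  also have "\<dots> = (\<Sum>j\<in>T. A $ j $ i * y $ j)"
    by (rule sum.mono_neutral_right) (auto simp: T_def)
  finally have "\<bar>(A *v y) $ i\<bar> \<le> (\<Sum>j\<in>T. \<bar>A $ j $ i\<bar> * \<bar>y $ j\<bar>)"
    by (simp add: abs_mult[symmetric] sum_abs)
  also have "\<dots> \<le> L2_set (\<lambda>j. A $ j $ i) T * L2_set (\<lambda>j. y $ j) T"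
    by (rule L2_set_mult_ineq)
  also have "\<dots> \<le> norm (trunc_col A i S) * norm y"
  proof (intro mult_mono)
    have "card T \<le> k" using assms(3) unfolding l0norm_def T_def .
    then show "L2_set (\<lambda>j. A $ j $ i) T \<le> norm (trunc_col A i S)"
      using topk_set_sum_squares_le[OF assms(2)]
      by (simp add: L2_set_def norm_trunc_col_square[symmetric])
    show "L2_set (\<lambda>j. y $ j) T \<le> norm y"
      by (simp add: T_def L2_set_support_eq_norm)
  qed auto
  finally show ?thesis .
qed

lemma inner_le_sum_abs_mult:
  fixes y z :: "real ^ 'n"
  assumes "\<And>i. \<bar>z $ i\<bar> \<le> M"
  shows "y \<bullet> z \<le> M * (\<Sum>i\<in>UNIV. \<bar>y $ i\<bar>)"
proof -
  have "y \<bullet> z \<le> (\<Sum>i\<in>UNIV. \<bar>y $ i\<bar> * \<bar>z $ i\<bar>)"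
    unfolding inner_vec_def by (intro sum_mono) (simp add: abs_mult[symmetric])
  also have "\<dots> \<le> (\<Sum>i\<in>UNIV. \<bar>y $ i\<bar> * M)"
    using assms by (intro sum_mono mult_left_mono) auto
  finally show ?thesis by (simp add: sum_distrib_left mult.commute)
qed

lemma sparse_quadratic_form_le:
  fixes A :: "real ^ 'n ^ 'n" and S :: "'n \<Rightarrow> 'n set"
  assumes "transpose A = A" "\<And>i. topk_set A k i (S i)" "\<And>i. norm (trunc_col A i (S i)) \<le> M"
    and "l0norm y \<le> k"
  shows "y \<bullet> (A *v y) \<le> M * sqrt (real k) * (norm y)\<^sup>2"
proof -
  have "\<bar>(A *v y) $ i\<bar> \<le> M * norm y" for i
    using abs_matrix_vector_mult_le_norm_trunc_col[OF assms(1,2) assms(4), of i]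
      assms(3)[of i] by (meson mult_right_mono norm_ge_zero order_trans)
  then have "y \<bullet> (A *v y) \<le> M * norm y * (\<Sum>i\<in>UNIV. \<bar>y $ i\<bar>)"
    by (rule inner_le_sum_abs_mult)
  also have "\<dots> \<le> M * norm y * (sqrt (real k) * norm y)"
  proof (rule mult_left_mono)
    have "(\<Sum>i\<in>UNIV. \<bar>y $ i\<bar>) \<le> sqrt (real (l0norm y)) * norm y"
      by (rule sum_abs_le_sqrt_l0norm)
    also have "\<dots> \<le> sqrt (real k) * norm y" using assms(4) by (simp add: mult_right_mono)
    finally show "(\<Sum>i\<in>UNIV. \<bar>y $ i\<bar>) \<le> sqrt (real k) * norm y" .
    show "0 \<le> M * norm y" using assms(3) norm_ge_zero order_trans by (meson mult_nonneg_nonneg)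
  qed
  finally show ?thesis by (simp add: power2_eq_square mult_ac)
qed

lemma sparse_opt_le:
  fixes A :: "real ^ 'n ^ 'n"
  assumes "1 \<le> k" "\<And>y. norm y = 1 \<Longrightarrow> l0norm y \<le> k \<Longrightarrow> y \<bullet> (A *v y) \<le> B"
  shows "sparse_opt A k \<le> B"
  unfolding sparse_opt_def
proof (rule cSup_least)
  fix i :: 'n
  have "l0norm (axis i (1 :: real)) = 1" unfolding l0norm_def by (simp add: axis_def)
  then show "{y \<bullet> (A *v y) |y. norm y = 1 \<and> l0norm y \<le> k} \<noteq> {}"
    using assms(1) by (auto intro!: exI[of _ "axis i 1"])
qed (use assms(2) in auto)

theorem lemma1:
  fixes A :: "real ^ 'n ^ 'n" and k :: nat and S :: "'n \<Rightarrow> 'n set"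
  assumes "sym_psd A"
    and "1 \<le> k" and "k \<le> CARD('n)"
    and "\<forall>i. topk_set A k i (S i)"
  shows "Max ((\<lambda>v. v \<bullet> (A *v v)) `
           ((\<lambda>i. inverse (norm (trunc_col A i (S i))) *\<^sub>R trunc_col A i (S i)) ` UNIV
            \<union> (\<lambda>i. axis i 1) ` UNIV))
         \<ge> sparse_opt A k / sqrt (real k)"
  (is "Max (?q ` (?X \<union> ?E)) \<ge> _")
proof -
  define M where "M = Max (?q ` (?X \<union> ?E))"
  have le_M: "?q v \<le> M" if "v \<in> ?X \<union> ?E" for v
    unfolding M_def using that by (intro Max_ge) auto
  have "A $ i $ i \<le> M" for i
    using le_M[OF UnI2[OF rangeI]] by (simp only: quadratic_form_axis)
  then have "norm (trunc_col A i (S i)) \<le> M" for i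
    using norm_trunc_col_le[OF assms(1) le_M[OF UnI1[OF rangeI]]] by blast
  then have "?q y \<le> M * sqrt (real k) * (norm y)\<^sup>2" if "l0norm y \<le> k" for y
    using sparse_quadratic_form_le[of A k S M] assms(1,4) that unfolding sym_psd_def by blast
  then have "sparse_opt A k \<le> M * sqrt (real k)"
    by (intro sparse_opt_le[OF assms(2)]) (metis mult_1_right power_one)
  then show ?thesis using assms(2) unfolding M_def by (simp add: divide_le_eq)
qed

end
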